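(* Let $t\in\mathbb{Q}^\times$ and $E_t:\ v^2=u^3+(t^2+2)u^2+u$. Then $E_t$ is isomorphic over $\mathbb{Q}$ to the elliptic curve $$E:\ y^2+xy+ay=x^3+ax^2,\qquad a=-\frac{1}{4t^2},$$ on which $[4](0,0)=\mathcal{O}$, and $E$ is $4$-isogenous (over $\mathbb{Q}$) to the elliptic curve $$E':\ Y^2+XY+AY=X^3+AX^2,\qquad A=\frac{t^2+4}{64},$$ via an isogeny $\phi:E\to E'$ of degree $4$ with $\phi(0,0)=\mathcal{O}$. *)

theory Defs
  imports Complex_Main "HOL-Computational_Algebra.Polynomial"
begin

text \<open>Long Weierstrass equations
  y^2 + a1 x y + a3 y = x^3 + a2 x^2 + a4 x + a6,
  given by their coefficients (a1, a2, a3, a4, a6).\<close>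

datatype 'a wcurve = W 'a 'a 'a 'a 'a

text \<open>Points of the projective curve: None is the point at infinity O,
  Some (x, y) an affine point.\<close>

type_synonym 'a ecpoint = "('a \<times> 'a) option"

fun wmap :: "('a \<Rightarrow> 'b) \<Rightarrow> 'a wcurve \<Rightarrow> 'b wcurve" where
  "wmap f (W a1 a2 a3 a4 a6) = W (f a1) (f a2) (f a3) (f a4) (f a6)"

fun weq :: "'a::comm_ring_1 wcurve \<Rightarrow> 'a \<Rightarrow> 'a \<Rightarrow> 'a" where
  "weq (W a1 a2 a3 a4 a6) x y =
     y^2 + a1 * x * y + a3 * y - (x^3 + a2 * x^2 + a4 * x + a6)"

fun on_curve :: "'a::comm_ring_1 wcurve \<Rightarrow> 'a ecpoint \<Rightarrow> bool" where
  "on_curve E None = True"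
| "on_curve E (Some (x, y)) = (weq E x y = 0)"

text \<open>Discriminant (Silverman, III.1).\<close>

fun discriminant :: "'a::comm_ring_1 wcurve \<Rightarrow> 'a" where
  "discriminant (W a1 a2 a3 a4 a6) =
     (let b2 = a1^2 + 4 * a2;
          b4 = 2 * a4 + a1 * a3;
          b6 = a3^2 + 4 * a6;
          b8 = a1^2 * a6 + 4 * a2 * a6 - a1 * a3 * a4 + a2 * a3^2 - a4^2
      in - (b2^2 * b8) - 8 * b4^3 - 27 * b6^2 + 9 * b2 * b4 * b6)"

definition elliptic :: "'a::comm_ring_1 wcurve \<Rightarrow> bool" where
  "elliptic E \<longleftrightarrow> discriminant E \<noteq> 0"

text \<open>Group law (Silverman, Algorithm III.2.3), on points of the curve.\<close>

fun ec_add :: "'a::field wcurve \<Rightarrow> 'a ecpoint \<Rightarrow> 'a ecpoint \<Rightarrow> 'a ecpoint" where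
  "ec_add E None Q = Q"
| "ec_add E (Some p) None = Some p"
| "ec_add (W a1 a2 a3 a4 a6) (Some (x1, y1)) (Some (x2, y2)) =
     (if x1 = x2 \<and> y1 + y2 + a1 * x2 + a3 = 0 then None
      else
        (let lam = (if x1 = x2
                    then (3 * x1^2 + 2 * a2 * x1 + a4 - a1 * y1) / (2 * y1 + a1 * x1 + a3)
                    else (y2 - y1) / (x2 - x1));
             nu = (if x1 = x2
                   then (- (x1^3) + a4 * x1 + 2 * a6 - a3 * y1) / (2 * y1 + a1 * x1 + a3)
                   else (y1 * x2 - y2 * x1) / (x2 - x1));
             x3 = lam^2 + a1 * lam - a2 - x1 - x2;
             y3 = - (lam + a1) * x3 - nu - a3
         in Some (x3, y3)))"

fun ec_smul :: "'a::field wcurve \<Rightarrow> nat \<Rightarrow> 'a ecpoint \<Rightarrow> 'a ecpoint" where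
  "ec_smul E 0 P = None"
| "ec_smul E (Suc n) P = ec_add E P (ec_smul E n P)"

definition iso_over_Q :: "rat wcurve \<Rightarrow> rat wcurve \<Rightarrow> bool" where
  "iso_over_Q E E' \<longleftrightarrow>
     (\<exists>u r s t. u \<noteq> 0 \<and>
        (\<forall>x' y'. weq E (u^2 * x' + r) (u^3 * y' + s * u^2 * x' + t) = u^6 * weq E' x' y'))"

definition cpoly :: "rat poly \<Rightarrow> complex \<Rightarrow> complex" where
  "cpoly p z = poly (map_poly of_rat p) z"

text \<open>Isogeny over Q of degree d, viewed on complex points
  (C contains an algebraic closure of Q).  phi is a group homomorphism
  E(C) \<rightarrow> E'(C) which is given by rational functions with rational coefficients
  of the (always attainable) shape (x, y) \<mapsto> (R(x), S(x) y + T(x)) wherever these are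
  defined, and whose kernel over C has exactly d elements (in characteristic 0 every
  isogeny is separable, so the degree equals the size of the geometric kernel).\<close>

definition isogeny_over_Q ::
  "rat wcurve \<Rightarrow> rat wcurve \<Rightarrow> (complex ecpoint \<Rightarrow> complex ecpoint) \<Rightarrow> nat \<Rightarrow> bool" where
  "isogeny_over_Q E E' phi d \<longleftrightarrow>
     (let EC = wmap of_rat E; EC' = wmap of_rat E' in
       (\<forall>P. on_curve EC P \<longrightarrow> on_curve EC' (phi P)) \<and>
       (\<forall>P Q. on_curve EC P \<longrightarrow> on_curve EC Q \<longrightarrow>
              phi (ec_add EC P Q) = ec_add EC' (phi P) (phi Q)) \<and>
       (\<exists>Rn Rd Sn Sd Tn Td :: rat poly.
          Rd \<noteq> 0 \<and> Sd \<noteq> 0 \<and> Td \<noteq> 0 \<and>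
          (\<forall>x y. on_curve EC (Some (x, y)) \<longrightarrow>
                 cpoly Rd x \<noteq> 0 \<longrightarrow> cpoly Sd x \<noteq> 0 \<longrightarrow> cpoly Td x \<noteq> 0 \<longrightarrow>
                 phi (Some (x, y)) =
                   Some (cpoly Rn x / cpoly Rd x,
                         cpoly Sn x / cpoly Sd x * y + cpoly Tn x / cpoly Td x))) \<and>
       card {P. on_curve EC P \<and> phi P = None} = d)"

end

(*
  On E: y^2 + xy + ay = x^3 + ax^2 the multiples of (0,0) are (-a,0), (0,-a) and O, so
  (0,0) has order 4.  The 4-isogeny with kernel generated by (0,0) is built as a composite
  of two 2-isogenies of the form y^2 = x^3 + alpha x^2 + beta x -> y^2 = x^3 - 2 alpha x^2 +
  (alpha^2 - 4 beta) x, the first killing [2](0,0), interleaved with changes of Weierstrass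
  coordinates.  Each factor is a group homomorphism by the chord-tangent description of the
  group law: a map that fixes O, commutes with negation, is invariant under translation by
  its kernel and sends the three points of a line to the three points of a line is additive.
  Its kernel consists of the four points O, (0,0), (0,-a), (-a,0), and composing the explicit
  formulas exhibits it as a rational map with rational coefficients.
*)

theory Submission
  imports Defs
begin

section \<open>Chord-tangent addition\<close>

fun ec_neg :: "'a::comm_ring_1 wcurve \<Rightarrow> 'a ecpoint \<Rightarrow> 'a ecpoint" where
  "ec_neg E None = None"
| "ec_neg (W a1 a2 a3 a4 a6) (Some (x, y)) = Some (x, - y - a1 * x - a3)"

text \<open>\<open>line_cuts E l n x1 x2 x3\<close>: the line \<open>y = l x + n\<close> meets \<open>E\<close> in the three points
  with abscissae \<open>x1, x2, x3\<close> (with multiplicity), written as Vieta's formulas for the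
  cubic \<open>weq E x (l x + n)\<close>.\<close>

fun line_cuts :: "'a::comm_ring_1 wcurve \<Rightarrow> 'a \<Rightarrow> 'a \<Rightarrow> 'a \<Rightarrow> 'a \<Rightarrow> 'a \<Rightarrow> bool" where
  "line_cuts (W a1 a2 a3 a4 a6) l n x1 x2 x3 \<longleftrightarrow>
     x1 + x2 + x3 = l^2 + a1 * l - a2 \<and>
     x1 * x2 + x1 * x3 + x2 * x3 = a4 - 2 * l * n - a1 * n - a3 * l \<and>
     x1 * x2 * x3 = n^2 + a3 * n - a6"

fun nonsingular :: "'a::comm_ring_1 wcurve \<Rightarrow> bool" where
  "nonsingular (W a1 a2 a3 a4 a6) \<longleftrightarrow>
     (\<forall>x y. weq (W a1 a2 a3 a4 a6) x y = 0 \<longrightarrow> a1 * y - (3 * x^2 + 2 * a2 * x + a4) = 0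
        \<longrightarrow> 2 * y + a1 * x + a3 = 0 \<longrightarrow> False)"

lemma weq_on_line:
  "weq (W a1 a2 a3 a4 a6) x (l * x + n) =
     - (x^3) + (l^2 + a1 * l - a2) * x^2 + (2 * l * n + a1 * n + a3 * l - a4) * x
     + (n^2 + a3 * n - a6)"
  by (simp add: power2_eq_square power3_eq_cube algebra_simps)

lemma line_cuts_swap12: "line_cuts E l n x1 x2 x3 \<Longrightarrow> line_cuts E l n x2 x1 x3"
  by (cases E) (simp add: algebra_simps)

lemma line_cuts_swap23: "line_cuts E l n x1 x2 x3 \<Longrightarrow> line_cuts E l n x1 x3 x2"
  by (cases E) (simp add: algebra_simps)

lemma line_cuts_on_curve1:
  assumes "line_cuts E l n x1 x2 x3"
  shows "on_curve E (Some (x1, l * x1 + n))"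
proof (cases E)
  case (W a1 a2 a3 a4 a6)
  then have "weq E x1 (l * x1 + n) =
      - (x1^3) + (x1 + x2 + x3) * x1^2 - (x1 * x2 + x1 * x3 + x2 * x3) * x1 + x1 * x2 * x3"
    using assms by (simp only: weq_on_line line_cuts.simps) (simp add: algebra_simps)
  also have "\<dots> = 0" by (simp add: algebra_simps power2_eq_square power3_eq_cube)
  finally show ?thesis by simp
qed

lemma line_cuts_on_curve:
  assumes "line_cuts E l n x1 x2 x3"
  shows "on_curve E (Some (x1, l * x1 + n))" "on_curve E (Some (x2, l * x2 + n))"
    "on_curve E (Some (x3, l * x3 + n))"
  using line_cuts_on_curve1 line_cuts_swap12 line_cuts_swap23 assms by metis+

lemma ec_add_None_right [simp]: "ec_add E P None = P"
  by (cases P; cases E) auto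

lemma ec_add_secant:
  fixes a1 :: "'a::field"
  assumes h1: "weq (W a1 a2 a3 a4 a6) x1 y1 = 0" and h2: "weq (W a1 a2 a3 a4 a6) x2 y2 = 0"
    and x: "x1 \<noteq> x2"
  shows "\<exists>l n x3. y1 = l * x1 + n \<and> y2 = l * x2 + n \<and> line_cuts (W a1 a2 a3 a4 a6) l n x1 x2 x3 \<and>
    ec_add (W a1 a2 a3 a4 a6) (Some (x1, y1)) (Some (x2, y2)) =
      ec_neg (W a1 a2 a3 a4 a6) (Some (x3, l * x3 + n))"
proof -
  define l where "l = (y2 - y1) / (x2 - x1)"
  define n where "n = (y1 * x2 - y2 * x1) / (x2 - x1)"
  define x3 where "x3 = l^2 + a1 * l - a2 - x1 - x2"
  have d: "x2 - x1 \<noteq> 0" using x by simp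
  have lm: "l * (x2 - x1) = y2 - y1" and nm: "n * (x2 - x1) = y1 * x2 - y2 * x1"
    unfolding l_def n_def using d by simp_all
  have "(y1 - (l * x1 + n)) * (x2 - x1) = 0" "(y2 - (l * x2 + n)) * (x2 - x1) = 0"
    using lm nm by algebra+
  then have y: "y1 = l * x1 + n" "y2 = l * x2 + n" using d by simp_all
  have sum: "l^2 + a1 * l - a2 = x1 + x2 + x3" unfolding x3_def by simp
  have g1: "- (x1^3) + (x1 + x2 + x3) * x1^2 + (2 * l * n + a1 * n + a3 * l - a4) * x1
      + (n^2 + a3 * n - a6) = 0"
    and g2: "- (x2^3) + (x1 + x2 + x3) * x2^2 + (2 * l * n + a1 * n + a3 * l - a4) * x2
      + (n^2 + a3 * n - a6) = 0"
    using h1 h2 y weq_on_line[of a1 a2 a3 a4 a6 _ l n] unfolding sum by metis+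
  have "(x1 - x2) * (x1 * x2 + x1 * x3 + x2 * x3 - (a4 - 2 * l * n - a1 * n - a3 * l)) = 0"
    using g1 g2 by algebra
  then have B: "x1 * x2 + x1 * x3 + x2 * x3 = a4 - 2 * l * n - a1 * n - a3 * l"
    using x by simp
  have C: "x1 * x2 * x3 = n^2 + a3 * n - a6" using g1 B by algebra
  have "ec_add (W a1 a2 a3 a4 a6) (Some (x1, y1)) (Some (x2, y2)) = Some (x3, - (l + a1) * x3 - n - a3)"
    using x by (simp add: Let_def l_def n_def x3_def)
  then show ?thesis using y B C sum by (intro exI[of _ l] exI[of _ n] exI[of _ x3])
      (simp add: algebra_simps)
qed

lemma ec_add_tangent:
  fixes a1 :: "'a::field"
  assumes h: "weq (W a1 a2 a3 a4 a6) x1 y1 = 0" and D: "2 * y1 + a1 * x1 + a3 \<noteq> 0"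
  shows "\<exists>l n x3. y1 = l * x1 + n \<and> line_cuts (W a1 a2 a3 a4 a6) l n x1 x1 x3 \<and>
    ec_add (W a1 a2 a3 a4 a6) (Some (x1, y1)) (Some (x1, y1)) =
      ec_neg (W a1 a2 a3 a4 a6) (Some (x3, l * x3 + n))"
proof -
  define l where "l = (3 * x1^2 + 2 * a2 * x1 + a4 - a1 * y1) / (2 * y1 + a1 * x1 + a3)"
  define n where "n = (- (x1^3) + a4 * x1 + 2 * a6 - a3 * y1) / (2 * y1 + a1 * x1 + a3)"
  define x3 where "x3 = l^2 + a1 * l - a2 - x1 - x1"
  have lD: "l * (2 * y1 + a1 * x1 + a3) = 3 * x1^2 + 2 * a2 * x1 + a4 - a1 * y1"
    and nD: "n * (2 * y1 + a1 * x1 + a3) = - (x1^3) + a4 * x1 + 2 * a6 - a3 * y1"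
    unfolding l_def n_def using D by simp_all
  have "(y1 - (l * x1 + n)) * (2 * y1 + a1 * x1 + a3) = 0"
    using lD nD h by (simp only: weq.simps) algebra
  then have y: "y1 = l * x1 + n" using D by simp
  have sum: "l^2 + a1 * l - a2 = x1 + x1 + x3" unfolding x3_def by simp
  have g: "- (x1^3) + (x1 + x1 + x3) * x1^2 + (2 * l * n + a1 * n + a3 * l - a4) * x1
      + (n^2 + a3 * n - a6) = 0"
    using h y weq_on_line[of a1 a2 a3 a4 a6 x1 l n] unfolding sum by metis
  \<comment> \<open>the slope \<open>l\<close> makes \<open>x1\<close> a double root of the cubic\<close>
  have g': "- 3 * x1^2 + 2 * (x1 + x1 + x3) * x1 + (2 * l * n + a1 * n + a3 * l - a4) = 0"
    using lD y sum by algebra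
  have B: "x1 * x1 + x1 * x3 + x1 * x3 = a4 - 2 * l * n - a1 * n - a3 * l" using g' by algebra
  have C: "x1 * x1 * x3 = n^2 + a3 * n - a6" using g B by algebra
  have "\<not> (y1 + y1 + a1 * x1 + a3 = 0)" using D by (simp add: algebra_simps)
  then have "ec_add (W a1 a2 a3 a4 a6) (Some (x1, y1)) (Some (x1, y1)) = Some (x3, - (l + a1) * x3 - n - a3)"
    by (simp add: Let_def l_def n_def x3_def)
  then show ?thesis using y B C sum by (intro exI[of _ l] exI[of _ n] exI[of _ x3])
      (simp add: algebra_simps)
qed

lemma ec_add_chord_tangent:
  fixes a1 :: "'a::field"
  assumes h1: "weq (W a1 a2 a3 a4 a6) x1 y1 = 0" and h2: "weq (W a1 a2 a3 a4 a6) x2 y2 = 0"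
    and not_opposite: "\<not> (x1 = x2 \<and> y1 + y2 + a1 * x2 + a3 = 0)"
  shows "\<exists>l n x3. y1 = l * x1 + n \<and> y2 = l * x2 + n \<and> line_cuts (W a1 a2 a3 a4 a6) l n x1 x2 x3 \<and>
    ec_add (W a1 a2 a3 a4 a6) (Some (x1, y1)) (Some (x2, y2)) =
      ec_neg (W a1 a2 a3 a4 a6) (Some (x3, l * x3 + n))"
proof (cases "x1 = x2")
  case True
  have "(y1 - y2) * (y1 + y2 + a1 * x2 + a3) = 0"
    using h1 h2 True by (simp only: weq.simps) algebra
  with not_opposite True have "y2 = y1" by simp
  moreover have "2 * y1 + a1 * x1 + a3 \<noteq> 0"
    using not_opposite True \<open>y2 = y1\<close> by (auto simp: algebra_simps)
  ultimately show ?thesis using ec_add_tangent[OF h1] True by simp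
qed (rule ec_add_secant[OF h1 h2])

lemma ec_add_on_tangent:
  fixes a1 :: "'a::field"
  assumes ns: "nonsingular (W a1 a2 a3 a4 a6)" and cuts: "line_cuts (W a1 a2 a3 a4 a6) l n x1 x1 x3"
  shows "ec_add (W a1 a2 a3 a4 a6) (Some (x1, l * x1 + n)) (Some (x1, l * x1 + n)) =
         ec_neg (W a1 a2 a3 a4 a6) (Some (x3, l * x3 + n))"
proof -
  define y where "y = l * x1 + n"
  define D where "D = 2 * y + a1 * x1 + a3"
  have e: "x1 + x1 + x3 = l^2 + a1 * l - a2"
    "x1 * x1 + x1 * x3 + x1 * x3 = a4 - 2 * l * n - a1 * n - a3 * l"
    "x1 * x1 * x3 = n^2 + a3 * n - a6" using cuts by simp_all
  have on: "y^2 + a1 * x1 * y + a3 * y - (x1^3 + a2 * x1^2 + a4 * x1 + a6) = 0"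
    using line_cuts_on_curve(1)[OF cuts] unfolding y_def by simp
  \<comment> \<open>\<open>x1\<close> is a double root, so \<open>l\<close> is the slope of the tangent\<close>
  have slope: "- 3 * x1^2 - 2 * a2 * x1 - a4 + a1 * y + l * D = 0"
    using e unfolding D_def y_def by algebra
  have D: "D \<noteq> 0"
  proof
    assume "D = 0"
    then have "a1 * y - (3 * x1^2 + 2 * a2 * x1 + a4) = 0" "2 * y + a1 * x1 + a3 = 0"
      using slope unfolding D_def by (simp_all add: algebra_simps)
    then show False using ns on by auto
  qed
  have "3 * x1^2 + 2 * a2 * x1 + a4 - a1 * y = l * D" using slope by (simp add: algebra_simps)
  then have L: "(3 * x1^2 + 2 * a2 * x1 + a4 - a1 * y) / (2 * y + a1 * x1 + a3) = l"
    using D unfolding D_def by simp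
  have "- (x1^3) + a4 * x1 + 2 * a6 - a3 * y = n * D"
    using slope on unfolding D_def y_def by algebra
  then have N: "(- (x1^3) + a4 * x1 + 2 * a6 - a3 * y) / (2 * y + a1 * x1 + a3) = n"
    using D unfolding D_def by simp
  have x3: "x3 = l^2 + a1 * l - a2 - x1 - x1" using e by (simp add: algebra_simps)
  have "\<not> (x1 = x1 \<and> y + y + a1 * x1 + a3 = 0)" using D unfolding D_def by (simp add: algebra_simps)
  then show ?thesis unfolding y_def[symmetric]
    by (simp only: ec_add.simps if_False if_True refl Let_def L N) (simp add: x3 algebra_simps)
qed

lemma ec_add_on_line:
  fixes a1 :: "'a::field"
  assumes ns: "nonsingular (W a1 a2 a3 a4 a6)" and cuts: "line_cuts (W a1 a2 a3 a4 a6) l n x1 x2 x3"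
  shows "ec_add (W a1 a2 a3 a4 a6) (Some (x1, l * x1 + n)) (Some (x2, l * x2 + n)) =
         ec_neg (W a1 a2 a3 a4 a6) (Some (x3, l * x3 + n))"
proof (cases "x1 = x2")
  case False
  have d: "x2 - x1 \<noteq> 0" using False by simp
  have "l * x2 + n - (l * x1 + n) = l * (x2 - x1)"
    and "(l * x1 + n) * x2 - (l * x2 + n) * x1 = n * (x2 - x1)" by (simp_all add: algebra_simps)
  then have L: "(l * x2 + n - (l * x1 + n)) / (x2 - x1) = l"
    and N: "((l * x1 + n) * x2 - (l * x2 + n) * x1) / (x2 - x1) = n" using d by simp_all
  have x3: "x3 = l^2 + a1 * l - a2 - x1 - x2" using cuts by (simp add: algebra_simps)
  show ?thesis
    by (simp only: ec_add.simps False simp_thms if_False Let_def L N) (simp add: x3 algebra_simps)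
qed (use ec_add_on_tangent[OF ns] cuts in simp)

lemma ec_add_commute:
  fixes a1 :: "'a::field"
  assumes h1: "weq (W a1 a2 a3 a4 a6) x1 y1 = 0" and h2: "weq (W a1 a2 a3 a4 a6) x2 y2 = 0"
  shows "ec_add (W a1 a2 a3 a4 a6) (Some (x1, y1)) (Some (x2, y2)) =
         ec_add (W a1 a2 a3 a4 a6) (Some (x2, y2)) (Some (x1, y1))"
proof (cases "x1 = x2")
  case True
  have "(y1 - y2) * (y1 + y2 + a1 * x2 + a3) = 0"
    using h1 h2 True by (simp only: weq.simps) algebra
  then have "y1 = y2 \<or> y1 + y2 + a1 * x2 + a3 = 0" by simp
  then show ?thesis
  proof
    assume "y1 = y2"
    then show ?thesis using True by simp
  next
    assume opposite: "y1 + y2 + a1 * x2 + a3 = 0"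
    then have "y2 + y1 + a1 * x1 + a3 = 0" using True by (simp add: algebra_simps)
    then show ?thesis using opposite True by simp
  qed
next
  case False
  then have "x2 - x1 \<noteq> 0" "x1 - x2 \<noteq> 0" by auto
  then have slope: "(y2 - y1) / (x2 - x1) = (y1 - y2) / (x1 - x2)"
    and intercept: "(y1 * x2 - y2 * x1) / (x2 - x1) = (y2 * x1 - y1 * x2) / (x1 - x2)"
    by (simp_all add: field_simps)
  show ?thesis using False
    by (simp only: ec_add.simps slope intercept) (simp add: Let_def algebra_simps)
qed

section \<open>Homomorphisms between Weierstrass curves\<close>

definition ec_hom :: "'a::field wcurve \<Rightarrow> 'b::field wcurve \<Rightarrow> ('a ecpoint \<Rightarrow> 'b ecpoint) \<Rightarrow> bool" where
  "ec_hom E E' f \<longleftrightarrow>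
     (\<forall>P. on_curve E P \<longrightarrow> on_curve E' (f P)) \<and>
     (\<forall>P Q. on_curve E P \<longrightarrow> on_curve E Q \<longrightarrow> f (ec_add E P Q) = ec_add E' (f P) (f Q))"

lemma ec_hom_comp: "ec_hom E1 E2 f \<Longrightarrow> ec_hom E2 E3 g \<Longrightarrow> ec_hom E1 E3 (g \<circ> f)"
  by (simp add: ec_hom_def)

definition maps_lines :: "'a::comm_ring_1 wcurve \<Rightarrow> 'b::comm_ring_1 wcurve \<Rightarrow> ('a ecpoint \<Rightarrow> 'b ecpoint) \<Rightarrow> bool" where
  "maps_lines E E' f \<longleftrightarrow>
     (\<forall>l n x1 x2 x3. line_cuts E l n x1 x2 x3 \<longrightarrow>
        f (Some (x1, l * x1 + n)) \<noteq> None \<longrightarrow> f (Some (x2, l * x2 + n)) \<noteq> None \<longrightarrow>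
        f (Some (x3, l * x3 + n)) \<noteq> None \<longrightarrow>
        (\<exists>L N X1 X2 X3. line_cuts E' L N X1 X2 X3 \<and>
           f (Some (x1, l * x1 + n)) = Some (X1, L * X1 + N) \<and>
           f (Some (x2, l * x2 + n)) = Some (X2, L * X2 + N) \<and>
           f (Some (x3, l * x3 + n)) = Some (X3, L * X3 + N)))"

lemma ec_hom_chord_case:
  fixes f :: "'a::field ecpoint \<Rightarrow> 'b::field ecpoint"
  assumes ns: "nonsingular (W a1 a2 a3 a4 a6)" "nonsingular (W b1 b2 b3 b4 b6)"
    and neg: "\<And>P. on_curve (W a1 a2 a3 a4 a6) P \<Longrightarrow>
                f (ec_neg (W a1 a2 a3 a4 a6) P) = ec_neg (W b1 b2 b3 b4 b6) (f P)"
    and kernel: "\<And>P T. on_curve (W a1 a2 a3 a4 a6) P \<Longrightarrow> on_curve (W a1 a2 a3 a4 a6) T \<Longrightarrow>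
                f T = None \<Longrightarrow> f (ec_add (W a1 a2 a3 a4 a6) P T) = f P"
    and lines: "maps_lines (W a1 a2 a3 a4 a6) (W b1 b2 b3 b4 b6) f"
    and cuts: "line_cuts (W a1 a2 a3 a4 a6) l n x1 x2 x3"
    and P: "P = Some (x1, l * x1 + n)" and Q: "Q = Some (x2, l * x2 + n)"
    and fP: "f P \<noteq> None" and fQ: "f Q \<noteq> None"
  shows "f (ec_add (W a1 a2 a3 a4 a6) P Q) = ec_add (W b1 b2 b3 b4 b6) (f P) (f Q)"
proof -
  define S where "S = Some (x3, l * x3 + n)"
  have on: "on_curve (W a1 a2 a3 a4 a6) P" "on_curve (W a1 a2 a3 a4 a6) Q"
    "on_curve (W a1 a2 a3 a4 a6) S"
    using line_cuts_on_curve[OF cuts] unfolding P Q S_def by simp_all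
  have PQ: "ec_add (W a1 a2 a3 a4 a6) P Q = ec_neg (W a1 a2 a3 a4 a6) S"
    using ec_add_on_line[OF ns(1) cuts] unfolding P Q S_def .
  show ?thesis
  proof (cases "f S = None")
    case True
    \<comment> \<open>\<open>f P = f (P + S) = f (- Q)\<close>, so both sides are \<open>O\<close>\<close>
    have "ec_add (W a1 a2 a3 a4 a6) P S = ec_neg (W a1 a2 a3 a4 a6) Q"
      using ec_add_on_line[OF ns(1) line_cuts_swap23[OF cuts]] unfolding P Q S_def .
    then have "f P = ec_neg (W b1 b2 b3 b4 b6) (f Q)"
      using kernel[OF on(1) on(3) True] neg[OF on(2)] by simp
    moreover obtain X Y where "f Q = Some (X, Y)" using fQ by auto
    ultimately show ?thesis using PQ neg[OF on(3)] True by simp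
  next
    case False
    obtain L N X1 X2 X3 where cuts': "line_cuts (W b1 b2 b3 b4 b6) L N X1 X2 X3"
      and "f P = Some (X1, L * X1 + N)" "f Q = Some (X2, L * X2 + N)" "f S = Some (X3, L * X3 + N)"
      using lines cuts fP fQ False unfolding maps_lines_def P Q S_def by blast
    then show ?thesis using ec_add_on_line[OF ns(2) cuts'] PQ neg[OF on(3)] by simp
  qed
qed

lemma ec_hom_affine_case:
  fixes f :: "'a::field ecpoint \<Rightarrow> 'b::field ecpoint"
  assumes ns: "nonsingular (W a1 a2 a3 a4 a6)" "nonsingular (W b1 b2 b3 b4 b6)"
    and zero: "f None = None"
    and neg: "\<And>P. on_curve (W a1 a2 a3 a4 a6) P \<Longrightarrow>
                f (ec_neg (W a1 a2 a3 a4 a6) P) = ec_neg (W b1 b2 b3 b4 b6) (f P)"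
    and kernel: "\<And>P T. on_curve (W a1 a2 a3 a4 a6) P \<Longrightarrow> on_curve (W a1 a2 a3 a4 a6) T \<Longrightarrow>
                f T = None \<Longrightarrow> f (ec_add (W a1 a2 a3 a4 a6) P T) = f P"
    and lines: "maps_lines (W a1 a2 a3 a4 a6) (W b1 b2 b3 b4 b6) f"
    and p: "P = Some (x1, y1)" and q: "Q = Some (x2, y2)"
    and P: "on_curve (W a1 a2 a3 a4 a6) P" and Q: "on_curve (W a1 a2 a3 a4 a6) Q"
    and fP: "f P \<noteq> None" and fQ: "f Q \<noteq> None"
  shows "f (ec_add (W a1 a2 a3 a4 a6) P Q) = ec_add (W b1 b2 b3 b4 b6) (f P) (f Q)"
proof (cases "x1 = x2 \<and> y1 + y2 + a1 * x2 + a3 = 0")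
  case True
  then have "y2 = - y1 - a1 * x1 - a3" by (simp add: eq_neg_iff_add_eq_0 algebra_simps)
  then have "Q = ec_neg (W a1 a2 a3 a4 a6) P" using True p q by simp
  moreover obtain X Y where "f P = Some (X, Y)" using fP by auto
  ultimately show ?thesis using True p q neg[OF P] zero by simp
next
  case False
  have "weq (W a1 a2 a3 a4 a6) x1 y1 = 0" "weq (W a1 a2 a3 a4 a6) x2 y2 = 0" using P Q p q by simp_all
  then obtain l n x3 where "y1 = l * x1 + n" "y2 = l * x2 + n"
    and "line_cuts (W a1 a2 a3 a4 a6) l n x1 x2 x3"
    using ec_add_chord_tangent False by blast
  then show ?thesis using ec_hom_chord_case[OF ns neg kernel lines] p q fP fQ by blast
qed

lemma ec_homI:
  fixes f :: "'a::field ecpoint \<Rightarrow> 'b::field ecpoint"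
  assumes ns: "nonsingular (W a1 a2 a3 a4 a6)" "nonsingular (W b1 b2 b3 b4 b6)"
    and on_curve: "\<And>P. on_curve (W a1 a2 a3 a4 a6) P \<Longrightarrow> on_curve (W b1 b2 b3 b4 b6) (f P)"
    and zero: "f None = None"
    and neg: "\<And>P. on_curve (W a1 a2 a3 a4 a6) P \<Longrightarrow>
                f (ec_neg (W a1 a2 a3 a4 a6) P) = ec_neg (W b1 b2 b3 b4 b6) (f P)"
    and kernel: "\<And>P T. on_curve (W a1 a2 a3 a4 a6) P \<Longrightarrow> on_curve (W a1 a2 a3 a4 a6) T \<Longrightarrow>
                f T = None \<Longrightarrow> f (ec_add (W a1 a2 a3 a4 a6) P T) = f P"
    and lines: "maps_lines (W a1 a2 a3 a4 a6) (W b1 b2 b3 b4 b6) f"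
  shows "ec_hom (W a1 a2 a3 a4 a6) (W b1 b2 b3 b4 b6) f"
  unfolding ec_hom_def
proof (intro conjI allI impI)
  fix P Q assume P: "on_curve (W a1 a2 a3 a4 a6) P" and Q: "on_curve (W a1 a2 a3 a4 a6) Q"
  show "f (ec_add (W a1 a2 a3 a4 a6) P Q) = ec_add (W b1 b2 b3 b4 b6) (f P) (f Q)"
  proof (cases "P = None \<or> Q = None")
    case True
    then show ?thesis using zero by auto
  next
    case False
    then obtain x1 y1 x2 y2 where p: "P = Some (x1, y1)" and q: "Q = Some (x2, y2)" by auto
    consider "f P = None" | "f Q = None" | "f P \<noteq> None" "f Q \<noteq> None" by blast
    then show ?thesis
    proof cases
      case 1
      have "weq (W a1 a2 a3 a4 a6) x1 y1 = 0" "weq (W a1 a2 a3 a4 a6) x2 y2 = 0"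
        using P Q p q by simp_all
      then have "ec_add (W a1 a2 a3 a4 a6) P Q = ec_add (W a1 a2 a3 a4 a6) Q P"
        unfolding p q by (rule ec_add_commute)
      then show ?thesis using kernel[OF Q P 1] 1 by simp
    next
      case 2
      then show ?thesis using kernel[OF P Q 2] by simp
    next
      case 3
      then show ?thesis using ec_hom_affine_case[OF ns zero neg kernel lines p q P Q] by blast
    qed
  qed
qed (rule on_curve)

section \<open>Changes of coordinates\<close>

definition ec_transform :: "'a::field \<Rightarrow> 'a \<Rightarrow> 'a \<Rightarrow> 'a \<Rightarrow> 'a ecpoint \<Rightarrow> 'a ecpoint" where
  "ec_transform u r s t = map_option (\<lambda>(x, y). ((x - r) / u^2, (y - s * (x - r) - t) / u^3))"

lemma ec_transform_simps [simp]:
  "ec_transform u r s t None = None"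
  "ec_transform u r s t (Some (x, y)) = Some ((x - r) / u^2, (y - s * (x - r) - t) / u^3)"
  by (simp_all add: ec_transform_def)

text \<open>The coefficients \<open>b\<^sub>i\<close> are those of the curve obtained from \<open>a\<^sub>i\<close> by the substitution
  \<open>x = u\<^sup>2 X + r\<close>, \<open>y = u\<^sup>3 Y + s u\<^sup>2 X + t\<close> (Silverman, Table III.1.2).\<close>

locale weierstrass_change =
  fixes u r s t a1 a2 a3 a4 a6 b1 b2 b3 b4 b6 :: "'a::field"
  assumes u: "u \<noteq> 0"
    and b1: "u * b1 = a1 + 2 * s"
    and b2: "u^2 * b2 = a2 - s * a1 + 3 * r - s^2"
    and b3: "u^3 * b3 = a3 + r * a1 + 2 * t"
    and b4: "u^4 * b4 = a4 - s * a3 + 2 * r * a2 - (t + r * s) * a1 + 3 * r^2 - 2 * s * t"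
    and b6: "u^6 * b6 = a6 + r * a4 + r^2 * a2 + r^3 - t * a3 - t^2 - r * t * a1"
begin

lemma weq_change:
  "weq (W a1 a2 a3 a4 a6) (u^2 * X + r) (u^3 * Y + s * u^2 * X + t) = u^6 * weq (W b1 b2 b3 b4 b6) X Y"
  using b1 b2 b3 b4 b6 by (simp only: weq.simps) algebra

lemma on_curve_ec_transform:
  assumes "on_curve (W a1 a2 a3 a4 a6) P"
  shows "on_curve (W b1 b2 b3 b4 b6) (ec_transform u r s t P)"
proof (cases P)
  case (Some p)
  obtain x y where p: "P = Some (x, y)" using Some by (cases p) auto
  have "u^6 * weq (W b1 b2 b3 b4 b6) ((x - r) / u^2) ((y - s * (x - r) - t) / u^3) = 0"
    using weq_change[of "(x - r) / u^2" "(y - s * (x - r) - t) / u^3"] assms p u by simp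
  then show ?thesis using p u by simp
qed simp

lemma ec_transform_neg:
  "ec_transform u r s t (ec_neg (W a1 a2 a3 a4 a6) P) = ec_neg (W b1 b2 b3 b4 b6) (ec_transform u r s t P)"
proof (cases P)
  case (Some p)
  obtain x y where p: "P = Some (x, y)" using Some by (cases p) auto
  have "u^3 * ((- y - a1 * x - a3 - s * (x - r) - t) / u^3) =
        u^3 * (- ((y - s * (x - r) - t) / u^3) - b1 * ((x - r) / u^2) - b3)"
    using u b1 b3 by (simp add: field_simps power2_eq_square power3_eq_cube) algebra
  then show ?thesis using p u by simp
qed simp

lemma ec_transform_line_point:
  "ec_transform u r s t (Some (x, l * x + n)) =
     Some ((x - r) / u^2, (l - s) / u * ((x - r) / u^2) + (l * r + n - t) / u^3)"
  using u by (simp add: field_simps power2_eq_square power3_eq_cube)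

lemma line_cuts_ec_transform:
  assumes "line_cuts (W a1 a2 a3 a4 a6) l n x1 x2 x3"
  shows "line_cuts (W b1 b2 b3 b4 b6) ((l - s) / u) ((l * r + n - t) / u^3)
           ((x1 - r) / u^2) ((x2 - r) / u^2) ((x3 - r) / u^2)"
proof -
  define L where "L = (l - s) / u"
  define N where "N = (l * r + n - t) / u^3"
  define X1 where "X1 = (x1 - r) / u^2"
  define X2 where "X2 = (x2 - r) / u^2"
  define X3 where "X3 = (x3 - r) / u^2"
  have x: "x1 = u^2 * X1 + r" "x2 = u^2 * X2 + r" "x3 = u^2 * X3 + r"
    and l: "l = u * L + s" and n: "n = u^3 * N + t - l * r"
    unfolding X1_def X2_def X3_def L_def N_def using u by simp_all
  have e: "x1 + x2 + x3 = l^2 + a1 * l - a2"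
    "x1 * x2 + x1 * x3 + x2 * x3 = a4 - 2 * l * n - a1 * n - a3 * l"
    "x1 * x2 * x3 = n^2 + a3 * n - a6" using assms by simp_all
  have "u^2 * (X1 + X2 + X3 - (L^2 + b1 * L - b2)) = 0"
    using e(1) b1 b2 x l by algebra
  moreover have "u^4 * (X1 * X2 + X1 * X3 + X2 * X3 - (b4 - 2 * L * N - b1 * N - b3 * L)) = 0"
    using e(1,2) b1 b2 b3 b4 x l n by algebra
  moreover have "u^6 * (X1 * X2 * X3 - (N^2 + b3 * N - b6)) = 0"
    using e b1 b2 b3 b4 b6 x l n by algebra
  ultimately show ?thesis using u unfolding L_def[symmetric] N_def[symmetric]
      X1_def[symmetric] X2_def[symmetric] X3_def[symmetric] by simp
qed

lemma ec_hom_ec_transform: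
  assumes "nonsingular (W a1 a2 a3 a4 a6)" "nonsingular (W b1 b2 b3 b4 b6)"
  shows "ec_hom (W a1 a2 a3 a4 a6) (W b1 b2 b3 b4 b6) (ec_transform u r s t)"
proof (rule ec_homI[OF assms])
  fix P T assume "ec_transform u r s t T = None"
  then have "T = None" by (cases T) auto
  then show "ec_transform u r s t (ec_add (W a1 a2 a3 a4 a6) P T) = ec_transform u r s t P" by simp
next
  show "maps_lines (W a1 a2 a3 a4 a6) (W b1 b2 b3 b4 b6) (ec_transform u r s t)"
    unfolding maps_lines_def using line_cuts_ec_transform ec_transform_line_point by blast
qed (simp_all add: on_curve_ec_transform ec_transform_neg)

end

section \<open>2-isogenies\<close>

abbreviation two_torsion_curve :: "'a::zero \<Rightarrow> 'a \<Rightarrow> 'a wcurve" where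
  "two_torsion_curve \<alpha> \<beta> \<equiv> W 0 \<alpha> 0 \<beta> 0"

text \<open>The 2-isogeny of \<open>y\<^sup>2 = x\<^sup>3 + \<alpha> x\<^sup>2 + \<beta> x\<close> with kernel \<open>{O, (0, 0)}\<close> onto
  \<open>y\<^sup>2 = x\<^sup>3 - 2 \<alpha> x\<^sup>2 + (\<alpha>\<^sup>2 - 4 \<beta>) x\<close> (Silverman, Example III.4.5).\<close>

definition two_isog :: "'a::field \<Rightarrow> 'a \<Rightarrow> 'a ecpoint \<Rightarrow> 'a ecpoint" where
  "two_isog \<alpha> \<beta> P = (case P of None \<Rightarrow> None
     | Some (x, y) \<Rightarrow> if x = 0 then None else Some (x + \<alpha> + \<beta> / x, y * (\<beta> / x^2 - 1)))"

lemma two_isog_simps [simp]: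
  "two_isog \<alpha> \<beta> None = None"
  "two_isog \<alpha> \<beta> (Some (0, y)) = None"
  "x \<noteq> 0 \<Longrightarrow> two_isog \<alpha> \<beta> (Some (x, y)) = Some (x + \<alpha> + \<beta> / x, y * (\<beta> / x^2 - 1))"
  by (simp_all add: two_isog_def)

lemma two_isog_eq_None_iff: "two_isog \<alpha> \<beta> P = None \<longleftrightarrow> P = None \<or> (\<exists>y. P = Some (0, y))"
  by (cases P) (auto simp: two_isog_def split: if_splits)

lemma nonsingular_two_torsion_curve:
  fixes \<alpha> :: "'a::field_char_0"
  assumes "\<beta> \<noteq> 0" "\<alpha>^2 - 4 * \<beta> \<noteq> 0"
  shows "nonsingular (two_torsion_curve \<alpha> \<beta>)"
  using assms by (simp only: nonsingular.simps weq.simps) (intro allI impI; algebra)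

lemma on_curve_two_isog:
  fixes \<alpha> :: "'a::field"
  assumes "on_curve (two_torsion_curve \<alpha> \<beta>) P"
  shows "on_curve (two_torsion_curve (- 2 * \<alpha>) (\<alpha>^2 - 4 * \<beta>)) (two_isog \<alpha> \<beta> P)"
proof (cases "P = None \<or> (\<exists>y. P = Some (0, y))")
  case False
  then obtain x y where p: "P = Some (x, y)" and x: "x \<noteq> 0" by (cases P) auto
  define w where "w = 1 / x"
  have "x * w = 1" using x unfolding w_def by simp
  moreover have "y^2 - (x^3 + \<alpha> * x^2 + \<beta> * x) = 0" using assms p by simp
  ultimately have "weq (two_torsion_curve (- 2 * \<alpha>) (\<alpha>^2 - 4 * \<beta>)) (x + \<alpha> + \<beta> * w)
      (y * (\<beta> * w^2 - 1)) = 0"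
    by (simp only: weq.simps) algebra
  then show ?thesis using p x unfolding w_def by (simp add: power_one_over)
qed auto

lemma two_isog_neg:
  "two_isog \<alpha> \<beta> (ec_neg (two_torsion_curve \<alpha> \<beta>) P) =
     ec_neg (two_torsion_curve (- 2 * \<alpha>) (\<alpha>^2 - 4 * \<beta>)) (two_isog \<alpha> \<beta> P)"
  by (cases P) (auto simp: two_isog_def)

lemma two_isog_translate_kernel:
  fixes \<alpha> :: "'a::field"
  assumes \<beta>: "\<beta> \<noteq> 0" and P: "on_curve (two_torsion_curve \<alpha> \<beta>) P"
    and T: "on_curve (two_torsion_curve \<alpha> \<beta>) T" and kernel: "two_isog \<alpha> \<beta> T = None"
  shows "two_isog \<alpha> \<beta> (ec_add (two_torsion_curve \<alpha> \<beta>) P T) = two_isog \<alpha> \<beta> P"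
proof (cases "T = None \<or> P = None")
  case True
  then show ?thesis using kernel by auto
next
  case False
  then obtain y0 x y where T0: "T = Some (0, y0)" and p: "P = Some (x, y)"
    using kernel by (auto simp: two_isog_eq_None_iff)
  then have "T = Some (0, 0)" using T by simp
  have c: "y^2 - (x^3 + \<alpha> * x^2 + \<beta> * x) = 0" using P p by simp
  show ?thesis
  proof (cases "x = 0")
    case True
    then have "y = 0" using c by simp
    then show ?thesis using p \<open>T = Some (0, 0)\<close> True by simp
  next
    case False
    have "(y / x)^2 = x + \<alpha> + \<beta> / x" using c False by (simp add: field_simps power2_eq_square power3_eq_cube)
    then have "ec_add (two_torsion_curve \<alpha> \<beta>) P T = Some (\<beta> / x, - (y / x) * (\<beta> / x))"
      using False unfolding p \<open>T = Some (0, 0)\<close> by (simp add: Let_def)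
    moreover have "two_isog \<alpha> \<beta> (Some (\<beta> / x, - (y / x) * (\<beta> / x))) = two_isog \<alpha> \<beta> P"
      using \<beta> False p by (simp add: field_simps power2_eq_square)
    ultimately show ?thesis by simp
  qed
qed

lemma two_isog_line_point:
  fixes \<alpha> :: "'a::field"
  assumes on: "weq (two_torsion_curve \<alpha> \<beta>) x (l * x + n) = 0" and x: "x \<noteq> 0" and n: "n \<noteq> 0"
  shows "two_isog \<alpha> \<beta> (Some (x, l * x + n)) =
    Some (x + \<alpha> + \<beta> / x, (\<beta> / n - l) * (x + \<alpha> + \<beta> / x) + (l * \<alpha> - n - \<beta> * l^2 / n))"
proof -
  define w where "w = 1 / x"
  define m where "m = 1 / n"
  have "x * w = 1" "n * m = 1" using x n unfolding w_def m_def by simp_all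
  then have "(l * x + n) * (\<beta> * w^2 - 1) = (\<beta> * m - l) * (x + \<alpha> + \<beta> * w) + (l * \<alpha> - n - \<beta> * l^2 * m)"
    using on by (simp only: weq.simps) algebra
  then show ?thesis using x unfolding w_def m_def by (simp add: power_one_over)
qed

lemma line_cuts_two_isog:
  fixes \<alpha> :: "'a::field"
  assumes cuts: "line_cuts (two_torsion_curve \<alpha> \<beta>) l n x1 x2 x3"
    and x: "x1 \<noteq> 0" "x2 \<noteq> 0" "x3 \<noteq> 0"
  shows "n \<noteq> 0"
    and "line_cuts (two_torsion_curve (- 2 * \<alpha>) (\<alpha>^2 - 4 * \<beta>)) (\<beta> / n - l) (l * \<alpha> - n - \<beta> * l^2 / n)
           (x1 + \<alpha> + \<beta> / x1) (x2 + \<alpha> + \<beta> / x2) (x3 + \<alpha> + \<beta> / x3)"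
proof -
  have e: "x1 + x2 + x3 = l^2 - \<alpha>" "x1 * x2 + x1 * x3 + x2 * x3 = \<beta> - 2 * l * n"
    "x1 * x2 * x3 = n^2" using cuts by simp_all
  then show "n \<noteq> 0" using x by auto
  define m where "m = 1 / n"
  define w1 where "w1 = 1 / x1"
  define w2 where "w2 = 1 / x2"
  define w3 where "w3 = 1 / x3"
  have inv: "n * m = 1" "x1 * w1 = 1" "x2 * w2 = 1" "x3 * w3 = 1"
    using x \<open>n \<noteq> 0\<close> unfolding m_def w1_def w2_def w3_def by simp_all
  have "line_cuts (two_torsion_curve (- 2 * \<alpha>) (\<alpha>^2 - 4 * \<beta>)) (\<beta> * m - l) (l * \<alpha> - n - \<beta> * l^2 * m)
           (x1 + \<alpha> + \<beta> * w1) (x2 + \<alpha> + \<beta> * w2) (x3 + \<alpha> + \<beta> * w3)"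
    using e inv by (simp only: line_cuts.simps) (intro conjI; algebra)
  then show "line_cuts (two_torsion_curve (- 2 * \<alpha>) (\<alpha>^2 - 4 * \<beta>)) (\<beta> / n - l) (l * \<alpha> - n - \<beta> * l^2 / n)
           (x1 + \<alpha> + \<beta> / x1) (x2 + \<alpha> + \<beta> / x2) (x3 + \<alpha> + \<beta> / x3)"
    unfolding m_def w1_def w2_def w3_def by simp
qed

lemma nonsingular_two_isog_target:
  fixes \<alpha> :: "'a::field_char_0"
  assumes "\<beta> \<noteq> 0" "\<alpha>^2 - 4 * \<beta> \<noteq> 0"
  shows "nonsingular (two_torsion_curve (- 2 * \<alpha>) (\<alpha>^2 - 4 * \<beta>))"
proof -
  have "(- 2 * \<alpha>)^2 - 4 * (\<alpha>^2 - 4 * \<beta>) = 16 * \<beta>" by (simp add: algebra_simps power2_eq_square)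
  then show ?thesis using assms by (intro nonsingular_two_torsion_curve) simp_all
qed

lemma ec_hom_two_isog:
  fixes \<alpha> :: "'a::field_char_0"
  assumes \<beta>: "\<beta> \<noteq> 0" and disc: "\<alpha>^2 - 4 * \<beta> \<noteq> 0"
  shows "ec_hom (two_torsion_curve \<alpha> \<beta>) (two_torsion_curve (- 2 * \<alpha>) (\<alpha>^2 - 4 * \<beta>)) (two_isog \<alpha> \<beta>)"
proof (rule ec_homI)
  show "nonsingular (two_torsion_curve \<alpha> \<beta>)"
    and "nonsingular (two_torsion_curve (- 2 * \<alpha>) (\<alpha>^2 - 4 * \<beta>))"
    using assms by (rule nonsingular_two_torsion_curve, rule nonsingular_two_isog_target)
next
  show "maps_lines (two_torsion_curve \<alpha> \<beta>) (two_torsion_curve (- 2 * \<alpha>) (\<alpha>^2 - 4 * \<beta>)) (two_isog \<alpha> \<beta>)"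
    unfolding maps_lines_def
  proof (intro allI impI)
    fix l n x1 x2 x3 assume cuts: "line_cuts (two_torsion_curve \<alpha> \<beta>) l n x1 x2 x3"
      and "two_isog \<alpha> \<beta> (Some (x1, l * x1 + n)) \<noteq> None" "two_isog \<alpha> \<beta> (Some (x2, l * x2 + n)) \<noteq> None"
        "two_isog \<alpha> \<beta> (Some (x3, l * x3 + n)) \<noteq> None"
    then have x: "x1 \<noteq> 0" "x2 \<noteq> 0" "x3 \<noteq> 0" by auto
    note on = line_cuts_on_curve[OF cuts, unfolded on_curve.simps]
    note n = line_cuts_two_isog(1)[OF cuts x]
    show "\<exists>L N X1 X2 X3. line_cuts (two_torsion_curve (- 2 * \<alpha>) (\<alpha>^2 - 4 * \<beta>)) L N X1 X2 X3 \<and>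
        two_isog \<alpha> \<beta> (Some (x1, l * x1 + n)) = Some (X1, L * X1 + N) \<and>
        two_isog \<alpha> \<beta> (Some (x2, l * x2 + n)) = Some (X2, L * X2 + N) \<and>
        two_isog \<alpha> \<beta> (Some (x3, l * x3 + n)) = Some (X3, L * X3 + N)"
      using line_cuts_two_isog(2)[OF cuts x] two_isog_line_point[OF on(1) x(1) n]
        two_isog_line_point[OF on(2) x(2) n] two_isog_line_point[OF on(3) x(3) n] by blast
  qed
qed (use on_curve_two_isog two_isog_neg two_isog_translate_kernel[OF \<beta>] in auto)

lemma discriminant_two_torsion_curve:
  "discriminant (two_torsion_curve \<alpha> \<beta>) = 16 * \<beta>^2 * (\<alpha>^2 - 4 * \<beta>)"
  by (simp add: Let_def eval_nat_numeral algebra_simps)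

lemma elliptic_two_torsion_curve:
  fixes \<alpha> :: "'a::field_char_0"
  assumes "\<beta> \<noteq> 0" "\<alpha>^2 - 4 * \<beta> \<noteq> 0"
  shows "elliptic (two_torsion_curve \<alpha> \<beta>)"
  using assms unfolding elliptic_def discriminant_two_torsion_curve by simp

section \<open>The curve \<open>y\<^sup>2 + x y + b y = x\<^sup>3 + b x\<^sup>2\<close>\<close>

abbreviation order4_curve :: "'a::{zero,one} \<Rightarrow> 'a wcurve" where
  "order4_curve b \<equiv> W 1 b b 0 0"

lemma nonsingular_order4_curve:
  fixes b :: "'a::field_char_0"
  assumes "b \<noteq> 0" "16 * b - 1 \<noteq> 0"
  shows "nonsingular (order4_curve b)"
  using assms by (simp only: nonsingular.simps weq.simps) (intro allI impI; algebra)

lemma discriminant_order4_curve: "discriminant (order4_curve b) = b^4 * (1 - 16 * b)"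
  by (simp add: Let_def eval_nat_numeral algebra_simps)

lemma elliptic_order4_curve:
  fixes b :: "'a::field_char_0"
  assumes "b \<noteq> 0" "16 * b - 1 \<noteq> 0"
  shows "elliptic (order4_curve b)"
  using assms unfolding elliptic_def discriminant_order4_curve by simp

lemma ec_smul_order4_curve:
  fixes b :: "'a::field"
  assumes "b \<noteq> 0"
  shows "ec_smul (order4_curve b) 4 (Some (0, 0)) = None"
proof -
  have "ec_add (order4_curve b) (Some (0, 0)) (Some (0, 0)) = Some (- b, 0)"
    and "ec_add (order4_curve b) (Some (0, 0)) (Some (- b, 0)) = Some (0, - b)"
    using assms by (simp_all add: Let_def)
  then show ?thesis by (simp add: eval_nat_numeral)
qed

section \<open>The 4-isogeny\<close>

definition a_of :: "'a::field \<Rightarrow> 'a" where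
  "a_of t = - 1 / (4 * t^2)"

definition A_of :: "'a::field \<Rightarrow> 'a" where
  "A_of t = (t^2 + 4) / 64"

lemma square_add_4_nonzero: "(t::'a::linordered_idom)^2 + 4 \<noteq> 0"
  by (metis add_nonneg_pos zero_le_power2 zero_less_numeral less_irrefl)

lemma of_rat_square_add_4_nonzero: "(of_rat t :: 'a::field_char_0)^2 + 4 \<noteq> 0"
  using square_add_4_nonzero[of t] by (metis of_rat_eq_0_iff of_rat_add of_rat_power of_rat_numeral_eq)

lemma a_of_nonzero:
  fixes t :: "'a::field_char_0"
  shows "t \<noteq> 0 \<Longrightarrow> a_of t \<noteq> 0"
  by (simp add: a_of_def)

lemma iso_over_Q_order4_curve:
  fixes t :: rat
  assumes "t \<noteq> 0"
  shows "iso_over_Q (two_torsion_curve (t^2 + 2) 1) (order4_curve (a_of t))"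
  unfolding iso_over_Q_def
proof (intro exI conjI allI)
  show "2 * t \<noteq> 0" using assms by simp
  have "4 * t^2 * a_of t = - 1" using assms by (simp add: a_of_def)
  then show "weq (two_torsion_curve (t^2 + 2) 1) ((2 * t)^2 * x' + - 1) ((2 * t)^3 * y' + t * (2 * t)^2 * x' + - t) =
      (2 * t)^6 * weq (order4_curve (a_of t)) x' y'" for x' y'
    by (simp only: weq.simps) algebra
qed

lemma weierstrass_change_order4_two_torsion:
  fixes a :: "'a::field_char_0"
  shows "weierstrass_change 1 (- a) (- 1/2) 0 1 a a 0 0 0 (1/4 - 2 * a) 0 (a^2) 0"
  by unfold_locales (simp_all add: field_simps power2_eq_square power3_eq_cube)

lemma weierstrass_change_shift:
  fixes a :: "'a::field_char_0"
  shows "weierstrass_change 1 (1/4) 0 0 0 (- 2 * (1/4 - 2 * a)) 0 ((1/4 - 2 * a)^2 - 4 * a^2) 0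
           0 (4 * a + 1/4) 0 a 0"
  by unfold_locales (simp_all add: field_simps power2_eq_square power3_eq_cube)

lemma weierstrass_change_two_torsion_order4:
  fixes u :: "'a::field_char_0"
  assumes "u \<noteq> 0" and u2: "u^2 = - 64 * a" and A: "A * (256 * a) = 16 * a - 1"
  shows "weierstrass_change u (u^2 * A) (u / 2) (u^3 * A / 2)
           0 (- 2 * (4 * a + 1/4)) 0 ((4 * a + 1/4)^2 - 4 * a) 0 1 A A 0 0"
proof
  show "u^2 * A = - 2 * (4 * a + 1/4) - u / 2 * 0 + 3 * (u^2 * A) - (u / 2)^2"
    using u2 A by (simp add: field_simps) algebra
  show "u^4 * 0 = (4 * a + 1/4)^2 - 4 * a - u / 2 * 0 + 2 * (u^2 * A) * (- 2 * (4 * a + 1/4))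
     - (u^3 * A / 2 + u^2 * A * (u / 2)) * 0 + 3 * (u^2 * A)^2 - 2 * (u / 2) * (u^3 * A / 2)"
    using u2 A by (simp add: field_simps) algebra
  show "u^6 * 0 = 0 + u^2 * A * ((4 * a + 1/4)^2 - 4 * a) + (u^2 * A)^2 * (- 2 * (4 * a + 1/4))
     + (u^2 * A)^3 - u^3 * A / 2 * 0 - (u^3 * A / 2)^2 - u^2 * A * (u^3 * A / 2) * 0"
    using u2 A by (simp add: field_simps) algebra
qed (use assms in simp_all)

text \<open>The first change of variables moves \<open>[2](0, 0) = (-a, 0)\<close> to the 2-torsion point
  \<open>(0, 0)\<close> of \<open>y\<^sup>2 = x\<^sup>3 + (1/4 - 2a) x\<^sup>2 + a\<^sup>2 x\<close>; after the first 2-isogeny and the shift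
  by \<open>1/4\<close>, the image of \<open>(0, 0)\<close> is \<open>(0, 0)\<close> on \<open>y\<^sup>2 = x\<^sup>3 + (4a + 1/4) x\<^sup>2 + a x\<close>, which the
  second 2-isogeny kills; the last change of variables (with \<open>u = 4/t\<close>) lands on \<open>E'\<close>.\<close>

definition four_isog :: "'a::field \<Rightarrow> 'a ecpoint \<Rightarrow> 'a ecpoint" where
  "four_isog t =
     ec_transform (4 / t) ((4 / t)^2 * A_of t) (2 / t) ((4 / t)^3 * A_of t / 2)
     \<circ> two_isog (4 * a_of t + 1/4) (a_of t)
     \<circ> ec_transform 1 (1/4) 0 0
     \<circ> two_isog (1/4 - 2 * a_of t) (a_of t ^ 2)
     \<circ> ec_transform 1 (- a_of t) (- 1/2) 0"

lemma four_isog_zero: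
  fixes t :: "'a::field_char_0"
  assumes "t \<noteq> 0"
  shows "four_isog t (Some (0, y)) = None"
proof -
  have "a_of t \<noteq> 0" using assms by (rule a_of_nonzero)
  then have "a_of t + (1/4 - 2 * a_of t) + (a_of t)^2 / a_of t - 1/4 = 0"
    by (simp add: power2_eq_square)
  then show ?thesis using \<open>a_of t \<noteq> 0\<close> by (simp add: four_isog_def)
qed

lemma four_isog_neg_a: "four_isog t (Some (- a_of t, y)) = None"
  by (simp add: four_isog_def)

text \<open>Composing the five maps of \<open>four_isog\<close> and clearing denominators gives
  \<open>(x, y) \<mapsto> (R_num/R_den, (S_num y + T_num)/R_den\<^sup>2)\<close>.\<close>

definition R_den :: "'a::field \<Rightarrow> 'a poly" where
  "R_den t = [:0, 0, a_of t, 1:]"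

definition R_num :: "'a::field \<Rightarrow> 'a poly" where
  "R_num t = smult (t^2 / 16)
       (monom 1 4 + smult (4 * a_of t + 1/4) (R_den t) + smult (a_of t) ([:a_of t, 1:]^2))
     - smult (A_of t) (R_den t)"

definition S_num :: "'a::field \<Rightarrow> 'a poly" where
  "S_num t = smult (t^3 / 64)
     (([:a_of t ^ 2:] - [:a_of t, 1:]^2) * (smult (a_of t) ([:a_of t, 1:]^2) - monom 1 4))"

definition T_num :: "'a::field \<Rightarrow> 'a poly" where
  "T_num t = smult (1/2) ([:a_of t, 1:] * S_num t - R_num t * R_den t - smult (A_of t) (R_den t ^ 2))"

context
  fixes t :: "'a::field_char_0"
  assumes t: "t \<noteq> 0" and t4: "t^2 + 4 \<noteq> 0"
begin

lemma sixteen_a_of_ne_one: "16 * a_of t - 1 \<noteq> 0"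
proof
  assume "16 * a_of t - 1 = 0"
  then have "t^2 * (16 * a_of t - 1) = 0" by simp
  then have "t^2 + 4 = 0" using t by (simp add: a_of_def field_simps) algebra
  then show False using t4 by simp
qed

lemma A_of_nonzero: "A_of t \<noteq> 0"
  using t4 by (simp add: A_of_def)

lemma sixteen_A_of_ne_one: "16 * A_of t - 1 \<noteq> 0"
  using t by (simp add: A_of_def field_simps)

lemma ec_hom_four_isog: "ec_hom (order4_curve (a_of t)) (order4_curve (A_of t)) (four_isog t)"
proof -
  define a where "a = a_of t"
  define A where "A = A_of t"
  define u where "u = 4 / t"
  have a: "a \<noteq> 0" "16 * a - 1 \<noteq> 0" using a_of_nonzero[OF t] sixteen_a_of_ne_one unfolding a_def .
  have A: "A \<noteq> 0" "16 * A - 1 \<noteq> 0" using A_of_nonzero sixteen_A_of_ne_one unfolding A_def .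
  have u: "u \<noteq> 0" "u^2 = - 64 * a" using t unfolding u_def a_def a_of_def by (simp_all add: field_simps)
  have A_a: "A * (256 * a) = 16 * a - 1"
    using t unfolding A_def a_def A_of_def a_of_def by (simp add: field_simps)
  have "(1/4 - 2 * a)^2 - 4 * a^2 = 1/16 - a" "(4 * a + 1/4)^2 - 4 * a = (4 * a - 1/4)^2"
    by (simp_all add: field_simps power2_eq_square)
  moreover have "1/16 - a \<noteq> 0" "4 * a - 1/4 \<noteq> 0" using a(2) by (simp_all add: field_simps)
  ultimately have two1: "a^2 \<noteq> 0" "(1/4 - 2 * a)^2 - 4 * a^2 \<noteq> 0"
    and two2: "a \<noteq> 0" "(4 * a + 1/4)^2 - 4 * a \<noteq> 0" using a(1) by simp_all
  note ns1 = nonsingular_two_torsion_curve[OF two1] nonsingular_two_isog_target[OF two1]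
  note ns2 = nonsingular_two_torsion_curve[OF two2] nonsingular_two_isog_target[OF two2]
  have "ec_hom (order4_curve a) (two_torsion_curve (1/4 - 2 * a) (a^2)) (ec_transform 1 (- a) (- 1/2) 0)"
    using weierstrass_change_order4_two_torsion nonsingular_order4_curve[OF a] ns1(1)
    by (rule weierstrass_change.ec_hom_ec_transform)
  moreover note ec_hom_two_isog[OF two1]
  moreover have "ec_hom (two_torsion_curve (- 2 * (1/4 - 2 * a)) ((1/4 - 2 * a)^2 - 4 * a^2))
      (two_torsion_curve (4 * a + 1/4) a) (ec_transform 1 (1/4) 0 0)"
    using weierstrass_change_shift ns1(2) ns2(1) by (rule weierstrass_change.ec_hom_ec_transform)
  moreover note ec_hom_two_isog[OF two2]
  moreover have "ec_hom (two_torsion_curve (- 2 * (4 * a + 1/4)) ((4 * a + 1/4)^2 - 4 * a)) (order4_curve A)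
      (ec_transform u (u^2 * A) (u / 2) (u^3 * A / 2))"
    using weierstrass_change_two_torsion_order4[OF u A_a] ns2(2) nonsingular_order4_curve[OF A]
    by (rule weierstrass_change.ec_hom_ec_transform)
  ultimately have "ec_hom (order4_curve a) (order4_curve A)
      (ec_transform u (u^2 * A) (u / 2) (u^3 * A / 2) \<circ> two_isog (4 * a + 1/4) a
       \<circ> ec_transform 1 (1/4) 0 0 \<circ> two_isog (1/4 - 2 * a) (a^2) \<circ> ec_transform 1 (- a) (- 1/2) 0)"
    by (blast intro: ec_hom_comp)
  moreover have "u / 2 = 2 / t" unfolding u_def by simp
  ultimately show ?thesis unfolding four_isog_def a_def[symmetric] A_def[symmetric] u_def[symmetric]
    by simp
qed

lemma four_isog_Some:
  assumes x: "x \<noteq> 0" and xa: "x + a_of t \<noteq> 0"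
  shows "four_isog t (Some (x, y)) =
    (let a = a_of t; A = A_of t;
         X = x^2 / (x + a) + 4 * a + 1/4 + a * (x + a) / x^2;
         Y = (y + (x + a) / 2) * (a^2 / (x + a)^2 - 1) * (a * (x + a)^2 / x^4 - 1)
     in Some (t^2 / 16 * X - A, t^3 / 64 * Y - (t^2 / 16 * X - A) / 2 - A / 2))"
proof -
  define a where "a = a_of t"
  define A where "A = A_of t"
  define Y2 where "Y2 = (y + (x + a) / 2) * (a^2 / (x + a)^2 - 1)"
  have xa': "x + a \<noteq> 0" "x^2 / (x + a) \<noteq> 0" using x xa unfolding a_def by simp_all
  have "ec_transform 1 (- a) (- 1/2) 0 (Some (x, y)) = Some (x + a, y + (x + a) / 2)"
    by (simp add: field_simps)
  moreover have "two_isog (1/4 - 2 * a) (a^2) (Some (x + a, y + (x + a) / 2)) = Some (x^2 / (x + a) + 1/4, Y2)"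
    using xa' unfolding Y2_def by (simp add: field_simps power2_eq_square)
  moreover have "ec_transform 1 (1/4) 0 0 (Some (x^2 / (x + a) + 1/4, Y2)) = Some (x^2 / (x + a), Y2)"
    by simp
  moreover have "two_isog (4 * a + 1/4) a (Some (x^2 / (x + a), Y2)) =
      Some (x^2 / (x + a) + 4 * a + 1/4 + a * (x + a) / x^2, Y2 * (a * (x + a)^2 / x^4 - 1))"
    using xa' x by (simp add: field_simps power2_eq_square power4_eq_xxxx)
  ultimately show ?thesis using t unfolding four_isog_def a_def[symmetric] A_def[symmetric] Y2_def Let_def
    by (simp add: field_simps power2_eq_square power3_eq_cube)
qed

lemma four_isog_eq_None_iff:
  assumes on: "on_curve (order4_curve (a_of t)) P"
  shows "four_isog t P = None \<longleftrightarrow> P \<in> {None, Some (0, 0), Some (0, - a_of t), Some (- a_of t, 0)}"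
proof (cases P)
  case None
  then show ?thesis by (simp add: four_isog_def)
next
  case (Some p)
  then obtain x y where p: "P = Some (x, y)" by (cases p) auto
  have "y^2 + x * y + a_of t * y - (x^3 + a_of t * x^2) = 0" using on p by simp
  then have c: "y * (y + x + a_of t) = x^2 * (x + a_of t)" by algebra
  consider "x = 0" | "x + a_of t = 0" | "x \<noteq> 0" "x + a_of t \<noteq> 0" by blast
  then show ?thesis
  proof cases
    case 1
    then have "y = 0 \<or> y = - a_of t" using c by (simp add: eq_neg_iff_add_eq_0)
    then show ?thesis using p 1 four_isog_zero[OF t] by auto
  next
    case 2
    then have "x = - a_of t" "y = 0" using c by (simp_all add: eq_neg_iff_add_eq_0 add.assoc)
    then show ?thesis using p four_isog_neg_a by auto
  next
    case 3
    then have "P \<notin> {None, Some (0, 0), Some (0, - a_of t), Some (- a_of t, 0)}"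
      using p by (auto simp: eq_neg_iff_add_eq_0)
    moreover have "four_isog t P \<noteq> None" unfolding p four_isog_Some[OF 3] Let_def by simp
    ultimately show ?thesis by (simp only: simp_thms)
  qed
qed

lemma four_isog_kernel:
  "{P. on_curve (order4_curve (a_of t)) P \<and> four_isog t P = None} =
     {None, Some (0, 0), Some (0, - a_of t), Some (- a_of t, 0)}"
proof -
  have "on_curve (order4_curve (a_of t)) P"
    if "P \<in> {None, Some (0, 0), Some (0, - a_of t), Some (- a_of t, 0)}" for P
    using that by (auto simp: power2_eq_square power3_eq_cube)
  then show ?thesis using four_isog_eq_None_iff by auto
qed

lemma four_isog_rational:
  assumes "poly (R_den t) x \<noteq> 0"
  shows "four_isog t (Some (x, y)) =
    Some (poly (R_num t) x / poly (R_den t) x,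
          poly (S_num t) x / poly (R_den t ^ 2) x * y + poly (T_num t) x / poly (R_den t ^ 2) x)"
proof -
  define a where "a = a_of t"
  define A where "A = A_of t"
  have den: "poly (R_den t) x = x^2 * (x + a)" unfolding R_den_def a_def by (simp add: algebra_simps power2_eq_square)
  then have x: "x \<noteq> 0" "x + a \<noteq> 0" using assms by simp_all
  define p where "p = x^2 / (x + a)"
  define q where "q = a * (x + a) / x^2"
  define r where "r = a^2 / (x + a)^2 - 1"
  define s where "s = a * (x + a)^2 / x^4 - 1"
  have pq: "p * (x + a) = x^2" "q * x^2 = a * (x + a)" unfolding p_def q_def using x by simp_all
  have rs: "r * (x + a)^2 = a^2 - (x + a)^2" "s * x^4 = a * (x + a)^2 - x^4"
    unfolding r_def s_def using x by (simp_all add: field_simps)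
  define X where "X = p + 4 * a + 1/4 + q"
  define Y where "Y = (y + (x + a) / 2) * r * s"
  have R: "poly (R_num t) x = (t^2 / 16 * X - A) * poly (R_den t) x"
    using pq unfolding X_def R_num_def a_def[symmetric] A_def[symmetric]
    by (simp add: poly_monom den field_simps) algebra
  have ST: "poly (S_num t) x * y + poly (T_num t) x =
      (t^3 / 64 * Y - (t^2 / 16 * X - A) / 2 - A / 2) * poly (R_den t ^ 2) x"
    using rs unfolding Y_def T_num_def S_num_def a_def[symmetric] A_def[symmetric]
    by (simp add: poly_monom R den field_simps) algebra
  have X: "t^2 / 16 * X - A = poly (R_num t) x / poly (R_den t) x"
    using R assms by simp
  have Y: "t^3 / 64 * Y - poly (R_num t) x / poly (R_den t) x / 2 - A / 2 =
      poly (S_num t) x / poly (R_den t ^ 2) x * y + poly (T_num t) x / poly (R_den t ^ 2) x"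
    using ST assms unfolding X by (simp add: add_divide_distrib[symmetric] poly_power)
  show ?thesis using four_isog_Some[OF x(1) x(2)[unfolded a_def], where y = y]
    unfolding Let_def a_def[symmetric] A_def[symmetric] p_def[symmetric] q_def[symmetric] r_def[symmetric]
      s_def[symmetric] X_def[symmetric] Y_def[symmetric] X unfolding Y by simp
qed

end

lemma map_poly_of_rat_add: "map_poly of_rat (p + q) = map_poly of_rat p + map_poly of_rat q"
  by (rule poly_eqI) (simp add: coeff_map_poly of_rat_add)

lemma map_poly_of_rat_diff: "map_poly of_rat (p - q) = map_poly of_rat p - map_poly of_rat q"
  by (rule poly_eqI) (simp add: coeff_map_poly of_rat_diff)

lemma map_poly_of_rat_mult: "map_poly of_rat (p * q) = map_poly of_rat p * map_poly of_rat q"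
  by (rule poly_eqI) (simp add: coeff_map_poly coeff_mult of_rat_sum of_rat_mult)

lemma map_poly_of_rat_power: "map_poly of_rat (p ^ n) = map_poly of_rat p ^ n"
  by (induction n) (simp_all add: map_poly_of_rat_mult)

lemmas map_poly_of_rat_simps = map_poly_of_rat_add map_poly_of_rat_diff map_poly_of_rat_mult
  map_poly_of_rat_power map_poly_smult[of of_rat, OF of_rat_0 of_rat_mult]
  map_poly_pCons[of of_rat, OF of_rat_0] map_poly_monom[of of_rat, OF of_rat_0]

lemma of_rat_a_of: "of_rat (a_of t) = a_of (of_rat t)"
  by (simp add: a_of_def of_rat_divide of_rat_mult of_rat_power of_rat_minus)

lemma of_rat_A_of: "of_rat (A_of t) = A_of (of_rat t)"
  by (simp add: A_of_def of_rat_divide of_rat_add of_rat_power)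

lemma map_poly_of_rat_isog_polys:
  "map_poly of_rat (R_den t) = R_den (of_rat t)"
  "map_poly of_rat (R_num t) = R_num (of_rat t)"
  "map_poly of_rat (S_num t) = S_num (of_rat t)"
  "map_poly of_rat (T_num t) = T_num (of_rat t)"
  by (simp_all add: R_den_def R_num_def S_num_def T_num_def map_poly_of_rat_simps of_rat_a_of of_rat_A_of
      of_rat_divide of_rat_mult of_rat_power of_rat_add)

lemma four_isog_cpoly:
  fixes t :: rat
  assumes "t \<noteq> 0" and "cpoly (R_den t) x \<noteq> 0"
  shows "four_isog (of_rat t) (Some (x, y)) =
    Some (cpoly (R_num t) x / cpoly (R_den t) x,
          cpoly (S_num t) x / cpoly (R_den t ^ 2) x * y + cpoly (T_num t) x / cpoly (R_den t ^ 2) x)"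
  using four_isog_rational[of "of_rat t" x y] assms of_rat_square_add_4_nonzero[of t]
  unfolding cpoly_def map_poly_of_rat_power map_poly_of_rat_isog_polys by simp

lemma isogeny_over_Q_four_isog:
  fixes t :: rat
  assumes t: "t \<noteq> 0"
  shows "isogeny_over_Q (order4_curve (a_of t)) (order4_curve (A_of t)) (four_isog (of_rat t)) 4"
proof -
  define tc :: complex where "tc = of_rat t"
  have tc: "tc \<noteq> 0" "tc^2 + 4 \<noteq> 0" using t of_rat_square_add_4_nonzero unfolding tc_def by simp_all
  have curves: "wmap of_rat (order4_curve (a_of t)) = order4_curve (a_of tc)"
    "wmap of_rat (order4_curve (A_of t)) = order4_curve (A_of tc)"
    unfolding tc_def by (simp_all add: of_rat_a_of of_rat_A_of)
  show ?thesis
    unfolding isogeny_over_Q_def Let_def curves tc_def[symmetric]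
  proof (intro conjI)
    show "\<forall>P. on_curve (order4_curve (a_of tc)) P \<longrightarrow> on_curve (order4_curve (A_of tc)) (four_isog tc P)"
      and "\<forall>P Q. on_curve (order4_curve (a_of tc)) P \<longrightarrow> on_curve (order4_curve (a_of tc)) Q \<longrightarrow>
        four_isog tc (ec_add (order4_curve (a_of tc)) P Q) =
        ec_add (order4_curve (A_of tc)) (four_isog tc P) (four_isog tc Q)"
      using ec_hom_four_isog[OF tc] unfolding ec_hom_def by blast+
    have "R_den t \<noteq> 0" by (simp add: R_den_def)
    then show "\<exists>Rn Rd Sn Sd Tn Td :: rat poly. Rd \<noteq> 0 \<and> Sd \<noteq> 0 \<and> Td \<noteq> 0 \<and>
        (\<forall>x y. on_curve (order4_curve (a_of tc)) (Some (x, y)) \<longrightarrow>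
           cpoly Rd x \<noteq> 0 \<longrightarrow> cpoly Sd x \<noteq> 0 \<longrightarrow> cpoly Td x \<noteq> 0 \<longrightarrow>
           four_isog tc (Some (x, y)) =
             Some (cpoly Rn x / cpoly Rd x, cpoly Sn x / cpoly Sd x * y + cpoly Tn x / cpoly Td x))"
      using four_isog_cpoly[OF t] unfolding tc_def
      by (intro exI[of _ "R_num t"] exI[of _ "R_den t"] exI[of _ "S_num t"]
        exI[of _ "R_den t ^ 2"] exI[of _ "T_num t"] exI[of _ "R_den t ^ 2"]) simp
    show "card {P. on_curve (order4_curve (a_of tc)) P \<and> four_isog tc P = None} = 4"
      using a_of_nonzero[OF tc(1)] by (simp add: four_isog_kernel[OF tc])
  qed
qed

theorem proposition2p1:
  fixes t :: rat
  assumes "t \<noteq> 0"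
  shows "let Et = W 0 (t^2 + 2) 0 1 0;
             a = - 1 / (4 * t^2);
             E = W 1 a a 0 0;
             A = (t^2 + 4) / 64;
             E' = W 1 A A 0 0
         in elliptic Et \<and> elliptic E \<and> elliptic E' \<and>
            iso_over_Q Et E \<and>
            on_curve E (Some (0, 0)) \<and> ec_smul E 4 (Some (0, 0)) = None \<and>
            (\<exists>phi. isogeny_over_Q E E' phi 4 \<and> phi (Some (0, 0)) = None)"
proof -
  note t4 = square_add_4_nonzero[of t]
  have "(t^2 + 2)^2 - 4 * 1 = t^2 * (t^2 + 4)" by (simp add: power2_eq_square algebra_simps)
  then have "elliptic (two_torsion_curve (t^2 + 2) 1)"
    using assms t4 by (intro elliptic_two_torsion_curve) simp_all
  moreover have "elliptic (order4_curve (a_of t))" "elliptic (order4_curve (A_of t))"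
    using elliptic_order4_curve a_of_nonzero[OF assms] sixteen_a_of_ne_one[OF assms t4]
      A_of_nonzero[OF assms t4] sixteen_A_of_ne_one[OF assms t4] by blast+
  moreover have "four_isog (of_rat t) (Some (0, 0)) = (None :: complex ecpoint)"
    using assms by (simp add: four_isog_zero)
  ultimately show ?thesis
    unfolding Let_def a_of_def[symmetric] A_of_def[symmetric]
    using iso_over_Q_order4_curve[OF assms] ec_smul_order4_curve[OF a_of_nonzero[OF assms]]
      isogeny_over_Q_four_isog[OF assms] by auto
qed

end
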